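(* For a nonzero ring $R$, the following are equivalent: (1) $R$ is local and uniquely weakly $J$-clean; (2) $R$ is uniquely weakly $J$-clean and $0,1$ are the only idempotents of $R$; (3) $R/J(R)\cong\mathbb{Z}_2$ or $R/J(R)\cong\mathbb{Z}_3$.
   Context: All rings are associative with identity; $J(R)$ is the Jacobson radical and $Idem(R)$ the set of idempotents. $R$ is uniquely weakly $J$-clean if for every $x\in R$ there exists a unique $e\in Idem(R)$ with $x-e\in J(R)$ or $x+e\in J(R)$. *)

theory Defs
  imports "HOL-Algebra.Algebra"
begin

definition left_ideal :: "('a, 'b) ring_scheme \<Rightarrow> 'a set \<Rightarrow> bool" where
  "left_ideal R I \<longleftrightarrow> additive_subgroup I R \<and>
     (\<forall>r \<in> carrier R. \<forall>x \<in> I. r \<otimes>\<^bsub>R\<^esub> x \<in> I)"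

definition maximal_left_ideal :: "('a, 'b) ring_scheme \<Rightarrow> 'a set \<Rightarrow> bool" where
  "maximal_left_ideal R I \<longleftrightarrow> left_ideal R I \<and> I \<noteq> carrier R \<and>
     (\<forall>K. left_ideal R K \<and> I \<subseteq> K \<longrightarrow> K = I \<or> K = carrier R)"

text \<open>Jacobson radical: intersection of all maximal left ideals (whole ring if there are none).\<close>
definition jacobson :: "('a, 'b) ring_scheme \<Rightarrow> 'a set" where
  "jacobson R = carrier R \<inter> \<Inter> {I. maximal_left_ideal R I}"

definition local_ring :: "('a, 'b) ring_scheme \<Rightarrow> bool" where
  "local_ring R \<longleftrightarrow> (\<exists>!I. maximal_left_ideal R I)"

definition Idem_set :: "('a, 'b) ring_scheme \<Rightarrow> 'a set" where
  "Idem_set R = {e \<in> carrier R. e \<otimes>\<^bsub>R\<^esub> e = e}"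

definition uniquely_weakly_J_clean :: "('a, 'b) ring_scheme \<Rightarrow> bool" where
  "uniquely_weakly_J_clean R \<longleftrightarrow>
     (\<forall>x \<in> carrier R. \<exists>!e. e \<in> Idem_set R \<and>
        (a_minus R x e \<in> jacobson R \<or> x \<oplus>\<^bsub>R\<^esub> e \<in> jacobson R))"

end

theory Submission
  imports Defs
begin

text \<open>Write \<open>J\<close> for \<open>J(R)\<close>. When \<open>0\<close> and \<open>1\<close> are the only idempotents, unique weak
  \<open>J\<close>-cleanness says precisely that every element lies in \<open>J\<close>, \<open>1 + J\<close> or \<open>-1 + J\<close>; the
  cases are exclusive because \<open>1 \<notin> J\<close>, which gives uniqueness. Conversely this covering
  forces the idempotents to be trivial, because an idempotent \<open>e\<close> with \<open>e \<in> J\<close> satisfies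
  \<open>(1 - e) e = 0\<close> with \<open>1 - e\<close> left invertible. The covering also makes \<open>J\<close> the only maximal
  left ideal, so \<open>R\<close> is local, while in a local ring every idempotent other than \<open>1\<close> lies
  in the maximal ideal \<open>J\<close> and hence vanishes. Finally the covering says that \<open>R/J\<close> consists
  of the classes of \<open>0, 1, -1\<close>: every element is congruent to an integer, and applied to
  \<open>2\<close> (where \<open>2 - 1 \<notin> J\<close>) it gives \<open>2 \<in> J\<close> or \<open>3 \<in> J\<close>, so reduction to integers is a ring
  homomorphism \<open>R \<rightarrow> \<int>/k\<close>, \<open>k \<in> {2,3}\<close>, with kernel \<open>J\<close>. Conversely, if \<open>R/J \<cong> \<int>/2\<close> or \<open>\<int>/3\<close>, its three (or two) classes are those
  of \<open>0, 1, -1\<close>.\<close>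

section \<open>Left ideals and the Jacobson radical\<close>

context ring
begin

lemma left_idealI:
  assumes "I \<subseteq> carrier R" "\<zero> \<in> I" "\<And>x y. x \<in> I \<Longrightarrow> y \<in> I \<Longrightarrow> x \<oplus> y \<in> I"
    "\<And>x. x \<in> I \<Longrightarrow> \<ominus> x \<in> I" "\<And>r x. r \<in> carrier R \<Longrightarrow> x \<in> I \<Longrightarrow> r \<otimes> x \<in> I"
  shows "left_ideal R I"
  unfolding left_ideal_def
proof (intro conjI ballI)
  show "additive_subgroup I R"
    by (rule additive_subgroupI, rule add.subgroupI) (use assms in \<open>auto simp: a_inv_def\<close>)
qed (use assms in auto)

lemma left_idealD:
  assumes "left_ideal R I"
  shows "I \<subseteq> carrier R" "\<zero> \<in> I" "\<And>x y. x \<in> I \<Longrightarrow> y \<in> I \<Longrightarrow> x \<oplus> y \<in> I"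
    "\<And>x. x \<in> I \<Longrightarrow> \<ominus> x \<in> I" "\<And>r x. r \<in> carrier R \<Longrightarrow> x \<in> I \<Longrightarrow> r \<otimes> x \<in> I"
    "\<And>x y. x \<in> I \<Longrightarrow> y \<in> I \<Longrightarrow> x \<ominus> y \<in> I"
  using assms unfolding left_ideal_def
  by (auto simp: additive_subgroup.a_subset additive_subgroup.a_closed additive_subgroup.zero_closed
      additive_subgroup.a_inv_closed a_minus_def)

lemma left_ideal_eq_carrier:
  assumes "left_ideal R I" "\<one> \<in> I"
  shows "I = carrier R"
  using left_idealD[OF assms(1)] assms(2) by (metis r_one subsetI subset_antisym)

lemma left_ideal_one_mem_if_adjacent:
  assumes I: "left_ideal R I" and "x \<in> I" and "x \<ominus> \<one> \<in> I \<or> x \<oplus> \<one> \<in> I"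
  shows "\<one> \<in> I"
proof -
  have x: "x \<in> carrier R" using assms(2) left_idealD(1)[OF I] by blast
  have "x \<ominus> (x \<ominus> \<one>) = \<one>"
    using x by (simp only: a_minus_def minus_add minus_minus one_closed add.inv_closed r_neg2)
  moreover have "(x \<oplus> \<one>) \<ominus> x = \<one>"
    using x unfolding a_minus_def by (subst a_comm) (simp_all add: r_neg1)
  ultimately show ?thesis
    using assms(2,3) left_idealD(6)[OF I] by metis
qed

lemma principal_left_ideal: "y \<in> carrier R \<Longrightarrow> left_ideal R {r \<otimes> y | r. r \<in> carrier R}"
proof (rule left_idealI)
  assume y: "y \<in> carrier R"
  show "\<zero> \<in> {r \<otimes> y | r. r \<in> carrier R}" using y by (auto intro!: exI[of _ \<zero>])
  show "x \<oplus> z \<in> {r \<otimes> y | r. r \<in> carrier R}"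
    if "x \<in> {r \<otimes> y | r. r \<in> carrier R}" "z \<in> {r \<otimes> y | r. r \<in> carrier R}" for x z
    using that y by (auto simp: l_distr[symmetric])
  show "\<ominus> x \<in> {r \<otimes> y | r. r \<in> carrier R}" if "x \<in> {r \<otimes> y | r. r \<in> carrier R}" for x
    using that y by (auto simp: l_minus[symmetric])
  show "s \<otimes> x \<in> {r \<otimes> y | r. r \<in> carrier R}"
    if "s \<in> carrier R" "x \<in> {r \<otimes> y | r. r \<in> carrier R}" for s x
    using that y by (auto simp: m_assoc[symmetric])
qed auto

lemma left_ideal_chain_Union:
  assumes "C \<noteq> {}" and ideals: "\<And>U. U \<in> C \<Longrightarrow> left_ideal R U"
    and chain: "\<And>U V. U \<in> C \<Longrightarrow> V \<in> C \<Longrightarrow> U \<subseteq> V \<or> V \<subseteq> U"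
  shows "left_ideal R (\<Union>C)"
proof (rule left_idealI)
  show "x \<oplus> y \<in> \<Union>C" if xy: "x \<in> \<Union>C" "y \<in> \<Union>C" for x y
  proof -
    obtain U V where UV: "U \<in> C" "V \<in> C" "x \<in> U" "y \<in> V" using xy by blast
    with chain[OF UV(1,2)] show ?thesis
      using left_idealD(3)[OF ideals[OF UV(1)]] left_idealD(3)[OF ideals[OF UV(2)]] by blast
  qed
  show "\<Union>C \<subseteq> carrier R" using ideals left_idealD(1) by blast
  show "\<zero> \<in> \<Union>C" using assms(1) ideals left_idealD(2) by blast
  show "\<ominus> x \<in> \<Union>C" if "x \<in> \<Union>C" for x using that ideals left_idealD(4) by blast
  show "r \<otimes> x \<in> \<Union>C" if "r \<in> carrier R" "x \<in> \<Union>C" for r x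
    using that ideals left_idealD(5) by blast
qed

lemma exists_maximal_left_ideal:
  assumes "left_ideal R I" "\<one> \<notin> I"
  shows "\<exists>M. maximal_left_ideal R M \<and> I \<subseteq> M"
proof -
  let ?A = "{K. left_ideal R K \<and> I \<subseteq> K \<and> \<one> \<notin> K}"
  have "\<exists>M\<in>?A. \<forall>K\<in>?A. M \<subseteq> K \<longrightarrow> K = M"
  proof (rule subset_Zorn_nonempty)
    fix C assume "C \<noteq> {}" "subset.chain ?A C"
    then show "\<Union>C \<in> ?A"
      using left_ideal_chain_Union[of C] by (auto simp: subset.chain_def)
  qed (use assms in auto)
  then obtain M where M: "M \<in> ?A" and M_max: "\<forall>K\<in>?A. M \<subseteq> K \<longrightarrow> K = M" by blast
  have "maximal_left_ideal R M"
    unfolding maximal_left_ideal_def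
    using M M_max left_ideal_eq_carrier by auto
  with M show ?thesis by blast
qed

lemma maximal_left_ideal_left_ideal: "maximal_left_ideal R M \<Longrightarrow> left_ideal R M"
  unfolding maximal_left_ideal_def by blast

lemma maximal_left_ideal_one_notin: "maximal_left_ideal R M \<Longrightarrow> \<one> \<notin> M"
  unfolding maximal_left_ideal_def using left_ideal_eq_carrier by blast

lemma jacobson_subset_maximal_left_ideal: "maximal_left_ideal R M \<Longrightarrow> jacobson R \<subseteq> M"
  unfolding jacobson_def by blast

lemma left_ideal_jacobson: "left_ideal R (jacobson R)"
  unfolding jacobson_def
proof (rule left_idealI)
  note M = left_idealD[OF maximal_left_ideal_left_ideal]
  show "\<zero> \<in> carrier R \<inter> \<Inter> {I. maximal_left_ideal R I}" using M(2) by blast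
  show "x \<oplus> y \<in> carrier R \<inter> \<Inter> {I. maximal_left_ideal R I}"
    if "x \<in> carrier R \<inter> \<Inter> {I. maximal_left_ideal R I}"
      "y \<in> carrier R \<inter> \<Inter> {I. maximal_left_ideal R I}" for x y
    using that M(3) by blast
  show "\<ominus> x \<in> carrier R \<inter> \<Inter> {I. maximal_left_ideal R I}"
    if "x \<in> carrier R \<inter> \<Inter> {I. maximal_left_ideal R I}" for x
    using that M(4) by blast
  show "r \<otimes> x \<in> carrier R \<inter> \<Inter> {I. maximal_left_ideal R I}"
    if "r \<in> carrier R" "x \<in> carrier R \<inter> \<Inter> {I. maximal_left_ideal R I}" for r x
    using that M(5) by blast
qed blast

lemma jacobson_closed: "x \<in> jacobson R \<Longrightarrow> x \<in> carrier R"
  using left_idealD(1)[OF left_ideal_jacobson] by blast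

lemma exists_maximal_left_ideal_if_nonzero:
  assumes "\<one> \<noteq> \<zero>"
  shows "\<exists>M. maximal_left_ideal R M"
proof -
  have "{r \<otimes> \<zero> | r. r \<in> carrier R} = {\<zero>}" by (auto intro!: exI[of _ \<zero>])
  then have "left_ideal R {\<zero>}" using principal_left_ideal[of \<zero>] by simp
  then show ?thesis using exists_maximal_left_ideal assms by blast
qed

lemma one_notin_jacobson: "\<one> \<noteq> \<zero> \<Longrightarrow> \<one> \<notin> jacobson R"
  using exists_maximal_left_ideal_if_nonzero jacobson_subset_maximal_left_ideal
    maximal_left_ideal_one_notin by blast

lemma jacobson_one_minus_left_invertible:
  assumes x: "x \<in> jacobson R"
  shows "\<exists>u \<in> carrier R. u \<otimes> (\<one> \<ominus> x) = \<one>"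
proof (rule ccontr)
  assume no_inverse: "\<not> ?thesis"
  let ?y = "\<one> \<ominus> x"
  have xc: "x \<in> carrier R" using x jacobson_closed by blast
  then have yc: "?y \<in> carrier R" by simp
  have "\<one> \<notin> {r \<otimes> ?y | r. r \<in> carrier R}" using no_inverse by auto
  then obtain M where M: "maximal_left_ideal R M" "{r \<otimes> ?y | r. r \<in> carrier R} \<subseteq> M"
    using exists_maximal_left_ideal principal_left_ideal[OF yc] by blast
  have "?y \<in> M" using M(2) yc by (auto intro!: exI[of _ \<one>])
  moreover have "x \<in> M" using M(1) jacobson_subset_maximal_left_ideal x by blast
  ultimately have "?y \<oplus> x \<in> M" using left_idealD(3)[OF maximal_left_ideal_left_ideal[OF M(1)]] by blast
  moreover have "?y \<oplus> x = \<one>" using xc by (simp add: a_minus_def a_assoc l_neg)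
  ultimately show False using maximal_left_ideal_one_notin[OF M(1)] by simp
qed

section \<open>Idempotents\<close>

lemma idempotent_left_invertible_eq_one:
  assumes "e \<in> carrier R" "e \<otimes> e = e" "u \<in> carrier R" "u \<otimes> e = \<one>"
  shows "e = \<one>"
proof -
  have "u \<otimes> (e \<otimes> e) = (u \<otimes> e) \<otimes> e" using assms(1,3) by (simp add: m_assoc)
  then show ?thesis using assms by simp
qed

lemma one_minus_idempotent:
  assumes "e \<in> carrier R" "e \<otimes> e = e"
  shows "(\<one> \<ominus> e) \<otimes> (\<one> \<ominus> e) = \<one> \<ominus> e"
  using assms by (simp add: a_minus_def l_distr r_distr l_minus r_minus minus_add a_ac r_neg r_neg1 r_neg2)

lemma idempotent_in_jacobson_eq_zero:
  assumes e: "e \<in> jacobson R" "e \<otimes> e = e"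
  shows "e = \<zero>"
proof -
  have ec: "e \<in> carrier R" using e(1) jacobson_closed by blast
  obtain u where u: "u \<in> carrier R" "u \<otimes> (\<one> \<ominus> e) = \<one>"
    using jacobson_one_minus_left_invertible[OF e(1)] by blast
  have "(\<one> \<ominus> e) \<otimes> e = \<zero>" using ec e(2) by (simp add: a_minus_def l_distr l_minus r_neg)
  then have "(u \<otimes> (\<one> \<ominus> e)) \<otimes> e = \<zero>" using u(1) ec by (simp add: m_assoc)
  then show ?thesis using u ec by simp
qed

lemma idempotent_eq_one_if_one_minus_in_jacobson:
  assumes "e \<in> carrier R" "e \<otimes> e = e" "\<one> \<ominus> e \<in> jacobson R"
  shows "e = \<one>"
proof -
  have "\<one> \<ominus> e = \<zero>"
    using idempotent_in_jacobson_eq_zero[OF assms(3) one_minus_idempotent[OF assms(1,2)]] .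
  then have "\<one> \<ominus> (\<one> \<ominus> e) = \<one>" by (simp add: a_minus_def)
  moreover have "\<one> \<ominus> (\<one> \<ominus> e) = e"
    using assms(1) by (simp add: a_minus_def minus_add a_ac r_neg r_neg1 r_neg2)
  ultimately show ?thesis by simp
qed

lemma local_ring_jacobson_eq:
  assumes "local_ring R" "maximal_left_ideal R M"
  shows "jacobson R = M"
proof -
  have "{I. maximal_left_ideal R I} = {M}" using assms unfolding local_ring_def by blast
  then show ?thesis
    using left_idealD(1)[OF maximal_left_ideal_left_ideal[OF assms(2)]] unfolding jacobson_def by auto
qed

lemma local_ring_idempotent_in_jacobson:
  assumes local: "local_ring R" and e: "e \<in> carrier R" "e \<otimes> e = e" "e \<noteq> \<one>"
  shows "e \<in> jacobson R"
proof -
  let ?L = "{r \<otimes> e | r. r \<in> carrier R}"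
  have "\<one> \<notin> ?L"
  proof
    assume "\<one> \<in> ?L"
    then obtain u where "u \<in> carrier R" "u \<otimes> e = \<one>" by auto
    then show False using idempotent_left_invertible_eq_one e by blast
  qed
  then obtain M where M: "maximal_left_ideal R M" "?L \<subseteq> M"
    using exists_maximal_left_ideal principal_left_ideal[OF e(1)] by blast
  have "e \<in> ?L" using e(1) by (auto intro!: exI[of _ \<one>])
  then show ?thesis using M(2) local_ring_jacobson_eq[OF local M(1)] by blast
qed

lemma local_ring_Idem_set:
  assumes "local_ring R"
  shows "Idem_set R = {\<zero>, \<one>}"
proof (intro equalityI subsetI)
  fix e assume "e \<in> Idem_set R"
  then have e: "e \<in> carrier R" "e \<otimes> e = e" by (auto simp: Idem_set_def)
  show "e \<in> {\<zero>, \<one>}"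
  proof (cases "e = \<one>")
    case False
    then show ?thesis
      using idempotent_in_jacobson_eq_zero[OF local_ring_idempotent_in_jacobson[OF assms e False] e(2)]
      by simp
  qed simp
qed (auto simp: Idem_set_def)

end

section \<open>Rings with \<open>R = J \<union> (1 + J) \<union> (-1 + J)\<close>\<close>

definition zero_pm_one_mod_jacobson :: "('a, 'b) ring_scheme \<Rightarrow> bool" where
  "zero_pm_one_mod_jacobson R \<longleftrightarrow> (\<forall>x \<in> carrier R.
     x \<in> jacobson R \<or> a_minus R x \<one>\<^bsub>R\<^esub> \<in> jacobson R \<or> x \<oplus>\<^bsub>R\<^esub> \<one>\<^bsub>R\<^esub> \<in> jacobson R)"

context ring
begin

lemma Idem_set_if_zero_pm_one_mod_jacobson:
  assumes "zero_pm_one_mod_jacobson R"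
  shows "Idem_set R = {\<zero>, \<one>}"
proof (intro equalityI subsetI)
  fix e assume "e \<in> Idem_set R"
  then have e: "e \<in> carrier R" "e \<otimes> e = e" by (auto simp: Idem_set_def)
  have "e \<ominus> \<one> \<in> jacobson R" if "e \<oplus> \<one> \<in> jacobson R"
  proof -
    have "e \<otimes> (e \<oplus> \<one>) \<ominus> (e \<oplus> \<one>) \<in> jacobson R"
      using that e(1) left_idealD(5,6)[OF left_ideal_jacobson] by blast
    moreover have "e \<otimes> (e \<oplus> \<one>) \<ominus> (e \<oplus> \<one>) = e \<ominus> \<one>"
      using e by (simp add: r_distr a_minus_def minus_add a_ac r_neg2)
    ultimately show ?thesis by simp
  qed
  moreover have "\<one> \<ominus> e \<in> jacobson R" if "e \<ominus> \<one> \<in> jacobson R"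
  proof -
    have "\<ominus> (e \<ominus> \<one>) \<in> jacobson R" using that left_idealD(4)[OF left_ideal_jacobson] by blast
    moreover have "\<ominus> (e \<ominus> \<one>) = \<one> \<ominus> e" using e(1) by (simp add: a_minus_def minus_add a_ac)
    ultimately show ?thesis by simp
  qed
  moreover have "e \<in> jacobson R \<or> e \<ominus> \<one> \<in> jacobson R \<or> e \<oplus> \<one> \<in> jacobson R"
    using assms e(1) unfolding zero_pm_one_mod_jacobson_def by blast
  ultimately have "e \<in> jacobson R \<or> \<one> \<ominus> e \<in> jacobson R" by blast
  then show "e \<in> {\<zero>, \<one>}"
    using idempotent_in_jacobson_eq_zero[OF _ e(2)] idempotent_eq_one_if_one_minus_in_jacobson[OF e]
    by blast
qed (auto simp: Idem_set_def)

lemma zero_pm_one_mod_jacobson_if_uniquely_weakly_J_clean: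
  assumes "uniquely_weakly_J_clean R" "Idem_set R = {\<zero>, \<one>}"
  shows "zero_pm_one_mod_jacobson R"
  unfolding zero_pm_one_mod_jacobson_def
proof
  fix x assume x: "x \<in> carrier R"
  then obtain e where "e \<in> Idem_set R" "x \<ominus> e \<in> jacobson R \<or> x \<oplus> e \<in> jacobson R"
    using assms(1) unfolding uniquely_weakly_J_clean_def by blast
  then show "x \<in> jacobson R \<or> x \<ominus> \<one> \<in> jacobson R \<or> x \<oplus> \<one> \<in> jacobson R"
    using assms(2) x by (auto simp: a_minus_def)
qed

lemma uniquely_weakly_J_clean_if_zero_pm_one_mod_jacobson:
  assumes nonzero: "\<one> \<noteq> \<zero>" and P: "zero_pm_one_mod_jacobson R"
  shows "uniquely_weakly_J_clean R"
  unfolding uniquely_weakly_J_clean_def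
proof
  fix x assume x: "x \<in> carrier R"
  let ?clean = "\<lambda>e. e \<in> Idem_set R \<and> (x \<ominus> e \<in> jacobson R \<or> x \<oplus> e \<in> jacobson R)"
  have clean_iff: "?clean e \<longleftrightarrow> (e = \<zero> \<and> x \<in> jacobson R)
      \<or> (e = \<one> \<and> (x \<ominus> \<one> \<in> jacobson R \<or> x \<oplus> \<one> \<in> jacobson R))" for e
    using Idem_set_if_zero_pm_one_mod_jacobson[OF P] x by (auto simp: a_minus_def)
  show "\<exists>!e. ?clean e"
  proof (cases "x \<in> jacobson R")
    case True
    then have "\<not> (x \<ominus> \<one> \<in> jacobson R \<or> x \<oplus> \<one> \<in> jacobson R)"
      using left_ideal_one_mem_if_adjacent[OF left_ideal_jacobson] one_notin_jacobson[OF nonzero] by blast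
    with True have "?clean e \<longleftrightarrow> e = \<zero>" for e unfolding clean_iff by blast
    then show ?thesis by simp
  next
    case False
    then have "x \<ominus> \<one> \<in> jacobson R \<or> x \<oplus> \<one> \<in> jacobson R"
      using P x unfolding zero_pm_one_mod_jacobson_def by blast
    with False have "?clean e \<longleftrightarrow> e = \<one>" for e unfolding clean_iff by blast
    then show ?thesis by simp
  qed
qed

lemma local_ring_if_zero_pm_one_mod_jacobson:
  assumes nonzero: "\<one> \<noteq> \<zero>" and P: "zero_pm_one_mod_jacobson R"
  shows "local_ring R"
proof -
  have "M \<subseteq> jacobson R" if M: "maximal_left_ideal R M" for M
  proof
    fix x assume xM: "x \<in> M"
    have M_ideal: "left_ideal R M" using maximal_left_ideal_left_ideal[OF M] .
    show "x \<in> jacobson R"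
    proof (rule ccontr)
      assume "x \<notin> jacobson R"
      moreover have "x \<in> carrier R" using xM left_idealD(1)[OF M_ideal] by blast
      ultimately have "x \<ominus> \<one> \<in> M \<or> x \<oplus> \<one> \<in> M"
        using P jacobson_subset_maximal_left_ideal[OF M] unfolding zero_pm_one_mod_jacobson_def by blast
      then show False
        using left_ideal_one_mem_if_adjacent[OF M_ideal xM] maximal_left_ideal_one_notin[OF M] by blast
    qed
  qed
  then have "M = jacobson R" if "maximal_left_ideal R M" for M
    using that jacobson_subset_maximal_left_ideal by blast
  then show ?thesis
    using exists_maximal_left_ideal_if_nonzero[OF nonzero] unfolding local_ring_def by blast
qed

end

section \<open>Comparison of \<open>R/J(R)\<close> with \<open>\<int>/k\<close>\<close>

lemma ring_hom_ring_ZMod: "ring_hom_ring \<Z> (ZFact k) (ZMod k)"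
proof (rule ring_hom_ringI2)
  have "ideal (Idl\<^bsub>\<Z>\<^esub> {k}) \<Z>" by (rule int.genideal_ideal) simp
  then have "(+>\<^bsub>\<Z>\<^esub>) (Idl\<^bsub>\<Z>\<^esub> {k}) \<in> ring_hom \<Z> (\<Z> Quot (Idl\<^bsub>\<Z>\<^esub> {k}))"
    by (rule ideal.rcos_ring_hom)
  moreover have "ZMod k = (+>\<^bsub>\<Z>\<^esub>) (Idl\<^bsub>\<Z>\<^esub> {k})" by (rule ext) (simp add: ZMod_def)
  ultimately show "ZMod k \<in> ring_hom \<Z> (ZFact k)" unfolding ZFact_def by simp
qed (simp_all add: int.ring_axioms cring.axioms(1)[OF ZFact_is_cring])

lemma ZMod_one: "ZMod k 1 = \<one>\<^bsub>ZFact k\<^esub>"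
proof -
  interpret ring_hom_ring \<Z> "ZFact k" "ZMod k" by (rule ring_hom_ring_ZMod)
  show ?thesis using hom_one by simp
qed

lemma ZMod_zero: "ZMod k 0 = \<zero>\<^bsub>ZFact k\<^esub>"
proof -
  interpret ring_hom_ring \<Z> "ZFact k" "ZMod k" by (rule ring_hom_ring_ZMod)
  show ?thesis using hom_zero by simp
qed

lemma ZFact_carrier_ZMod: "Y \<in> carrier (ZFact k) \<Longrightarrow> \<exists>n. Y = ZMod k n"
  by (auto simp: ZFact_def FactRing_def A_RCOSETS_defs ZMod_def a_r_coset_def)

lemma ZMod_minus_one: "ZMod k (- 1) = \<ominus>\<^bsub>ZFact k\<^esub> \<one>\<^bsub>ZFact k\<^esub>"
proof -
  interpret ring_hom_ring \<Z> "ZFact k" "ZMod k" by (rule ring_hom_ring_ZMod)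
  show ?thesis using hom_a_inv[of 1] by (simp add: ZMod_one)
qed

lemma ZFact_2_3_carrier:
  assumes "k = 2 \<or> k = 3" "Y \<in> carrier (ZFact k)"
  shows "Y \<in> {ZMod k 0, ZMod k 1, ZMod k (- 1)}"
proof -
  obtain n where "Y = ZMod k n" using ZFact_carrier_ZMod[OF assms(2)] by blast
  moreover have "n mod k = 0 mod k \<or> n mod k = 1 mod k \<or> n mod k = (- 1) mod k"
    using assms(1) by auto
  ultimately show ?thesis by (auto simp: ZMod_eq_mod)
qed

context ring
begin

definition int_embed :: "int \<Rightarrow> 'a" where
  "int_embed n = [n] \<cdot> \<one>"

lemma int_embed_closed [simp]: "int_embed n \<in> carrier R"
  unfolding int_embed_def by (rule add.int_pow_closed) simp

lemma int_embed_add: "int_embed (m + n) = int_embed m \<oplus> int_embed n"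
  unfolding int_embed_def using add.int_pow_mult[of \<one> m n] by simp

lemma int_embed_zero [simp]: "int_embed 0 = \<zero>"
  unfolding int_embed_def add_pow_def by simp

lemma int_embed_one [simp]: "int_embed 1 = \<one>"
  unfolding int_embed_def by simp

lemma int_embed_uminus: "int_embed (- n) = \<ominus> int_embed n"
  unfolding int_embed_def using add.int_pow_neg[of \<one> n] by simp

lemma int_embed_mult: "int_embed (m * n) = int_embed m \<otimes> int_embed n"
proof -
  have "int_embed m \<otimes> int_embed n = [m] \<cdot> (\<one> \<otimes> int_embed n)"
    unfolding int_embed_def[of m] by (rule add_pow_ldistr_int) simp_all
  also have "\<dots> = [m] \<cdot> ([n] \<cdot> \<one>)" by (simp add: int_embed_def)
  also have "\<dots> = [(n * m)] \<cdot> \<one>" using add.int_pow_pow[of \<one> m n] by simp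
  finally show ?thesis by (simp add: int_embed_def mult.commute)
qed

lemma int_embed_commute: "x \<in> carrier R \<Longrightarrow> x \<otimes> int_embed n = int_embed n \<otimes> x"
  unfolding int_embed_def using add_pow_ldistr_int[of \<one> x n] add_pow_rdistr_int[of x \<one> n] by simp

lemma jacobson_cong_refl: "x \<in> carrier R \<Longrightarrow> x \<ominus> x \<in> jacobson R"
  using left_idealD(2)[OF left_ideal_jacobson] by (simp add: a_minus_def r_neg)

lemma jacobson_cong_add:
  assumes "x \<in> carrier R" "y \<in> carrier R"
    and "x \<ominus> int_embed m \<in> jacobson R" "y \<ominus> int_embed n \<in> jacobson R"
  shows "(x \<oplus> y) \<ominus> int_embed (m + n) \<in> jacobson R"
proof -
  have "(x \<ominus> int_embed m) \<oplus> (y \<ominus> int_embed n) \<in> jacobson R"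
    using assms(3,4) left_idealD(3)[OF left_ideal_jacobson] by blast
  moreover have "(x \<ominus> int_embed m) \<oplus> (y \<ominus> int_embed n) = (x \<oplus> y) \<ominus> int_embed (m + n)"
    using assms(1,2) by (simp add: int_embed_add a_minus_def minus_add a_ac)
  ultimately show ?thesis by simp
qed

lemma jacobson_cong_mult:
  assumes "x \<in> carrier R" "y \<in> carrier R"
    and "x \<ominus> int_embed m \<in> jacobson R" "y \<ominus> int_embed n \<in> jacobson R"
  shows "(x \<otimes> y) \<ominus> int_embed (m * n) \<in> jacobson R"
proof -
  note J = left_idealD[OF left_ideal_jacobson]
  have "x \<otimes> (y \<ominus> int_embed n) \<in> jacobson R" using assms(1,4) J(5) by blast
  moreover have "int_embed n \<otimes> (x \<ominus> int_embed m) \<in> jacobson R" using assms(3) J(5) by simp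
  then have "(x \<ominus> int_embed m) \<otimes> int_embed n \<in> jacobson R"
    using int_embed_commute[of "x \<ominus> int_embed m" n] assms(1) by simp
  ultimately have "x \<otimes> (y \<ominus> int_embed n) \<oplus> (x \<ominus> int_embed m) \<otimes> int_embed n \<in> jacobson R"
    using J(3) by blast
  moreover have "x \<otimes> (y \<ominus> int_embed n) \<oplus> (x \<ominus> int_embed m) \<otimes> int_embed n
      = (x \<otimes> y) \<ominus> int_embed (m * n)"
    using assms(1,2)
    by (simp add: int_embed_mult a_minus_def r_distr l_distr r_minus l_minus a_ac r_neg1 r_neg2)
  ultimately show ?thesis by simp
qed

lemma jacobson_cong_diff:
  assumes "x \<in> carrier R" "x \<ominus> int_embed m \<in> jacobson R" "x \<ominus> int_embed n \<in> jacobson R"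
  shows "int_embed (m - n) \<in> jacobson R"
proof -
  have "(x \<ominus> int_embed n) \<ominus> (x \<ominus> int_embed m) \<in> jacobson R"
    using assms(2,3) left_idealD(6)[OF left_ideal_jacobson] by blast
  moreover have "(x \<ominus> int_embed n) \<ominus> (x \<ominus> int_embed m) = int_embed (m - n)"
    using assms(1) int_embed_add[of m "- n"]
    by (simp add: int_embed_uminus a_minus_def minus_add a_ac r_neg1 r_neg2)
  ultimately show ?thesis by simp
qed

lemma jacobson_cong_mem_iff:
  assumes "x \<in> carrier R" "x \<ominus> int_embed n \<in> jacobson R"
  shows "x \<in> jacobson R \<longleftrightarrow> int_embed n \<in> jacobson R"
proof
  assume "x \<in> jacobson R"
  then have "x \<ominus> (x \<ominus> int_embed n) \<in> jacobson R"
    using assms(2) left_idealD(6)[OF left_ideal_jacobson] by blast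
  moreover have "x \<ominus> (x \<ominus> int_embed n) = int_embed n"
    using assms(1) by (simp only: a_minus_def minus_add minus_minus int_embed_closed add.inv_closed r_neg2)
  ultimately show "int_embed n \<in> jacobson R" by simp
next
  assume "int_embed n \<in> jacobson R"
  then have "(x \<ominus> int_embed n) \<oplus> int_embed n \<in> jacobson R"
    using assms(2) left_idealD(3)[OF left_ideal_jacobson] by blast
  moreover have "(x \<ominus> int_embed n) \<oplus> int_embed n = x"
    using assms(1) by (simp add: a_minus_def a_ac r_neg r_neg1 r_neg2)
  ultimately show "x \<in> jacobson R" by simp
qed

lemma int_embed_in_jacobson_iff:
  assumes "0 < k" "int_embed k \<in> jacobson R"
    and below_k: "\<And>r. 0 < r \<Longrightarrow> r < k \<Longrightarrow> int_embed r \<notin> jacobson R"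
  shows "int_embed m \<in> jacobson R \<longleftrightarrow> k dvd m"
proof -
  note J = left_idealD[OF left_ideal_jacobson]
  have multiple: "int_embed (q * k) \<in> jacobson R" for q
    using J(5)[of "int_embed q" "int_embed k"] assms(2) by (simp add: int_embed_mult)
  have split: "int_embed m = int_embed (m div k * k) \<oplus> int_embed (m mod k)"
    using int_embed_add[of "m div k * k" "m mod k"] by simp
  have "int_embed m \<in> jacobson R \<longleftrightarrow> int_embed (m mod k) \<in> jacobson R"
  proof
    assume "int_embed m \<in> jacobson R"
    then have "int_embed m \<ominus> int_embed (m div k * k) \<in> jacobson R" using multiple J(6) by blast
    moreover have "int_embed m \<ominus> int_embed (m div k * k) = int_embed (m mod k)"
      unfolding split by (simp add: a_minus_def a_ac r_neg r_neg1 r_neg2)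
    ultimately show "int_embed (m mod k) \<in> jacobson R" by simp
  qed (use multiple J(3) split in metis)
  moreover have "0 \<le> m mod k" "m mod k < k" using assms(1) by simp_all
  ultimately show ?thesis
    using below_k[of "m mod k"] J(2) by (auto simp: dvd_eq_mod_eq_0 le_less)
qed

context
  fixes k :: int
  assumes k_pos: "0 < k"
    and k_in_jacobson: "int_embed k \<in> jacobson R"
    and below_k_notin_jacobson: "\<And>r. 0 < r \<Longrightarrow> r < k \<Longrightarrow> int_embed r \<notin> jacobson R"
    and int_cong: "\<And>x. x \<in> carrier R \<Longrightarrow> \<exists>n. x \<ominus> int_embed n \<in> jacobson R"
begin

definition jacobson_residue :: "'a \<Rightarrow> int set" where
  "jacobson_residue x = ZMod k (SOME n. x \<ominus> int_embed n \<in> jacobson R)"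

lemma jacobson_residue_eq:
  assumes x: "x \<in> carrier R" and n: "x \<ominus> int_embed n \<in> jacobson R"
  shows "jacobson_residue x = ZMod k n"
proof -
  let ?m = "SOME n. x \<ominus> int_embed n \<in> jacobson R"
  have "x \<ominus> int_embed ?m \<in> jacobson R" using someI_ex[OF int_cong[OF x]] .
  then have "int_embed (?m - n) \<in> jacobson R" using jacobson_cong_diff[OF x _ n] by blast
  then have "k dvd ?m - n"
    using int_embed_in_jacobson_iff[OF k_pos k_in_jacobson below_k_notin_jacobson] by blast
  then show ?thesis unfolding jacobson_residue_def by (simp add: ZMod_eq_mod mod_eq_dvd_iff)
qed

lemma jacobson_residue_ring_hom: "jacobson_residue \<in> ring_hom R (ZFact k)"
proof (rule ring_hom_memI)
  interpret ZMod: ring_hom_ring \<Z> "ZFact k" "ZMod k" by (rule ring_hom_ring_ZMod)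
  fix x y assume x: "x \<in> carrier R" and y: "y \<in> carrier R"
  obtain m n where m: "x \<ominus> int_embed m \<in> jacobson R" and n: "y \<ominus> int_embed n \<in> jacobson R"
    using int_cong x y by blast
  show "jacobson_residue x \<in> carrier (ZFact k)"
    using jacobson_residue_eq[OF x m] by simp
  show "jacobson_residue (x \<otimes> y) = jacobson_residue x \<otimes>\<^bsub>ZFact k\<^esub> jacobson_residue y"
    using jacobson_residue_eq[OF _ jacobson_cong_mult[OF x y m n]] x y
      jacobson_residue_eq[OF x m] jacobson_residue_eq[OF y n] by simp
  show "jacobson_residue (x \<oplus> y) = jacobson_residue x \<oplus>\<^bsub>ZFact k\<^esub> jacobson_residue y"
    using jacobson_residue_eq[OF _ jacobson_cong_add[OF x y m n]] x y
      jacobson_residue_eq[OF x m] jacobson_residue_eq[OF y n] by simp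
next
  show "jacobson_residue \<one> = \<one>\<^bsub>ZFact k\<^esub>"
    using jacobson_residue_eq[of \<one> 1] jacobson_cong_refl[of \<one>] by (simp add: ZMod_one)
qed

lemma jacobson_residue_surj: "jacobson_residue ` carrier R = carrier (ZFact k)"
proof (intro equalityI subsetI)
  fix Y assume "Y \<in> carrier (ZFact k)"
  then obtain n where "Y = ZMod k n" using ZFact_carrier_ZMod by blast
  moreover have "jacobson_residue (int_embed n) = ZMod k n"
    by (simp add: jacobson_residue_eq jacobson_cong_refl)
  ultimately show "Y \<in> jacobson_residue ` carrier R" using int_embed_closed by blast
qed (use ring_hom_closed[OF jacobson_residue_ring_hom] in blast)

lemma jacobson_residue_kernel: "a_kernel R (ZFact k) jacobson_residue = jacobson R"
proof -
  have "jacobson_residue x = \<zero>\<^bsub>ZFact k\<^esub> \<longleftrightarrow> x \<in> jacobson R" if x: "x \<in> carrier R" for x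
  proof -
    obtain n where n: "x \<ominus> int_embed n \<in> jacobson R" using int_cong[OF x] by blast
    have "jacobson_residue x = \<zero>\<^bsub>ZFact k\<^esub> \<longleftrightarrow> ZMod k n = ZMod k 0"
      using jacobson_residue_eq[OF x n] by (simp add: ZMod_zero)
    also have "\<dots> \<longleftrightarrow> k dvd n" by (simp add: ZMod_eq_mod dvd_eq_mod_eq_0)
    also have "\<dots> \<longleftrightarrow> x \<in> jacobson R"
      using int_embed_in_jacobson_iff[OF k_pos k_in_jacobson below_k_notin_jacobson]
        jacobson_cong_mem_iff[OF x n] by simp
    finally show ?thesis .
  qed
  then show ?thesis unfolding a_kernel_def' using jacobson_closed by blast
qed

lemma quotient_jacobson_iso_ZFact: "R Quot jacobson R \<simeq> ZFact k"
  using ring_hom_ring.FactRing_iso[OF _ jacobson_residue_surj] jacobson_residue_kernel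
    ring_hom_ringI2[OF ring_axioms cring.axioms(1)[OF ZFact_is_cring] jacobson_residue_ring_hom]
  by simp

end

lemma quotient_iso_abelian_group_hom:
  assumes I: "additive_subgroup I R" and \<phi>: "\<phi> \<in> ring_iso (R Quot I) S" and S: "abelian_group S"
  shows "abelian_group_hom R S (\<lambda>x. \<phi> (I +> x))"
proof (rule abelian_group_homI[OF is_abelian_group S])
  interpret I: abelian_subgroup I R using abelian_subgroupI3[OF I is_abelian_group] .
  have coset: "I +> x \<in> carrier (R Quot I)" if "x \<in> carrier R" for x
    using that unfolding FactRing_def A_RCOSETS_defs a_r_coset_def by auto
  have "(\<lambda>x. \<phi> (I +> x)) \<in> hom (add_monoid R) (add_monoid S)"
  proof (rule homI)
    fix x y assume "x \<in> carrier (add_monoid R)" "y \<in> carrier (add_monoid R)"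
    then have x: "x \<in> carrier R" and y: "y \<in> carrier R" by simp_all
    show "\<phi> (I +> x) \<in> carrier (add_monoid S)" using ring_iso_memE(1)[OF \<phi> coset[OF x]] by simp
    have "(I +> x) \<oplus>\<^bsub>R Quot I\<^esub> (I +> y) = I +> (x \<oplus> y)"
      unfolding FactRing_def using I.a_rcos_sum[OF x y] by simp
    then show "\<phi> (I +> x \<otimes>\<^bsub>add_monoid R\<^esub> y) = \<phi> (I +> x) \<otimes>\<^bsub>add_monoid S\<^esub> \<phi> (I +> y)"
      using ring_iso_memE(3)[OF \<phi> coset[OF x] coset[OF y]] by simp
  qed
  then show "group_hom (add_monoid R) (add_monoid S) (\<lambda>x. \<phi> (I +> x))"
    by (intro group_hom.intro group_hom_axioms.intro add.is_group abelian_group.a_group[OF S])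
qed

lemma quotient_iso_eq_imp_diff_mem:
  assumes I: "additive_subgroup I R" and \<phi>: "\<phi> \<in> ring_iso (R Quot I) S"
    and x: "x \<in> carrier R" and y: "y \<in> carrier R" and eq: "\<phi> (I +> x) = \<phi> (I +> y)"
  shows "x \<ominus> y \<in> I"
proof -
  interpret I: abelian_subgroup I R using abelian_subgroupI3[OF I is_abelian_group] .
  have coset: "I +> z \<in> carrier (R Quot I)" if "z \<in> carrier R" for z
    using that unfolding FactRing_def A_RCOSETS_defs a_r_coset_def by auto
  have "inj_on \<phi> (carrier (R Quot I))" using \<phi> unfolding ring_iso_def bij_betw_def by blast
  then have "I +> x = I +> y" using eq coset x y by (meson inj_onD)
  then have "x \<in> I +> y" using I.a_rcos_self[OF x] by simp
  then show ?thesis using I.a_rcos_module_minus[OF ring_axioms y x] by simp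
qed

lemma zero_pm_one_mod_jacobson_if_quotient_iso:
  assumes k: "k = 2 \<or> k = 3" and iso: "R Quot jacobson R \<simeq> ZFact k"
  shows "zero_pm_one_mod_jacobson R"
  unfolding zero_pm_one_mod_jacobson_def
proof
  obtain \<phi> where \<phi>: "\<phi> \<in> ring_iso (R Quot jacobson R) (ZFact k)"
    using iso unfolding is_ring_iso_def by blast
  have J: "additive_subgroup (jacobson R) R"
    using left_ideal_jacobson unfolding left_ideal_def by blast
  have Z: "abelian_group (ZFact k)" using ZFact_is_cring cring.axioms(1) ring.axioms(1) by blast
  define \<eta> where "\<eta> x = \<phi> (jacobson R +> x)" for x
  interpret \<eta>: abelian_group_hom R "ZFact k" \<eta>
    unfolding \<eta>_def by (rule quotient_iso_abelian_group_hom[OF J \<phi> Z])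
  have \<eta>_one: "\<eta> \<one> = \<one>\<^bsub>ZFact k\<^esub>"
    using ring_iso_memE(4)[OF \<phi>] unfolding \<eta>_def FactRing_def by simp
  fix x assume x: "x \<in> carrier R"
  have "\<eta> x \<in> {\<eta> \<zero>, \<eta> \<one>, \<eta> (\<ominus> \<one>)}"
    using ZFact_2_3_carrier[OF k \<eta>.hom_closed[OF x]] \<eta>_one by (simp add: ZMod_zero ZMod_one ZMod_minus_one)
  then obtain a where a: "a \<in> {\<zero>, \<one>, \<ominus> \<one>}" "\<eta> x = \<eta> a" by blast
  then have "x \<ominus> a \<in> jacobson R"
    using quotient_iso_eq_imp_diff_mem[OF J \<phi> x] unfolding \<eta>_def by auto
  then show "x \<in> jacobson R \<or> x \<ominus> \<one> \<in> jacobson R \<or> x \<oplus> \<one> \<in> jacobson R"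
    using a(1) x by (auto simp: a_minus_def)
qed

lemma quotient_jacobson_iso_ZFact_2_or_3:
  assumes nonzero: "\<one> \<noteq> \<zero>" and P: "zero_pm_one_mod_jacobson R"
  shows "R Quot jacobson R \<simeq> ZFact 2 \<or> R Quot jacobson R \<simeq> ZFact 3"
proof -
  have int_cong: "\<exists>n. x \<ominus> int_embed n \<in> jacobson R" if x: "x \<in> carrier R" for x
  proof -
    have "x \<ominus> int_embed 0 = x" "x \<ominus> int_embed (- 1) = x \<oplus> \<one>"
      using x by (simp_all add: a_minus_def int_embed_uminus)
    then show ?thesis using P x unfolding zero_pm_one_mod_jacobson_def by (metis int_embed_one)
  qed
  have one: "int_embed 1 \<notin> jacobson R" using one_notin_jacobson[OF nonzero] by simp
  have "int_embed 2 \<ominus> \<one> = int_embed 1" "int_embed 2 \<oplus> \<one> = int_embed 3"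
    using int_embed_add[of 1 1] int_embed_add[of 2 1] by (simp_all add: a_minus_def a_ac r_neg r_neg2)
  then have two_or_three: "int_embed 2 \<in> jacobson R \<or> int_embed 3 \<in> jacobson R"
    using P one unfolding zero_pm_one_mod_jacobson_def by (metis int_embed_closed)
  show ?thesis
  proof (cases "int_embed 2 \<in> jacobson R")
    case True
    have "int_embed r \<notin> jacobson R" if "0 < r" "r < 2" for r :: int
    proof -
      have "r = 1" using that by simp
      then show ?thesis using one by simp
    qed
    then show ?thesis using quotient_jacobson_iso_ZFact[of 2] True int_cong by simp
  next
    case False
    have "int_embed r \<notin> jacobson R" if "0 < r" "r < 3" for r :: int
    proof -
      have "r = 1 \<or> r = 2" using that by auto
      then show ?thesis using one False by auto
    qed
    then show ?thesis using quotient_jacobson_iso_ZFact[of 3] False two_or_three int_cong by simp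
  qed
qed

end

theorem mainTheorem13:
  fixes R :: "('a, 'b) ring_scheme"
  assumes "ring R" and "\<one>\<^bsub>R\<^esub> \<noteq> \<zero>\<^bsub>R\<^esub>"
  shows "(local_ring R \<and> uniquely_weakly_J_clean R
            \<longleftrightarrow> uniquely_weakly_J_clean R \<and> Idem_set R = {\<zero>\<^bsub>R\<^esub>, \<one>\<^bsub>R\<^esub>})
       \<and> (uniquely_weakly_J_clean R \<and> Idem_set R = {\<zero>\<^bsub>R\<^esub>, \<one>\<^bsub>R\<^esub>}
            \<longleftrightarrow> (R Quot jacobson R \<simeq> ZFact 2 \<or> R Quot jacobson R \<simeq> ZFact 3))"
proof -
  interpret ring R by (rule assms(1))
  have clean_iff: "uniquely_weakly_J_clean R \<and> Idem_set R = {\<zero>\<^bsub>R\<^esub>, \<one>\<^bsub>R\<^esub>}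
      \<longleftrightarrow> zero_pm_one_mod_jacobson R"
    using zero_pm_one_mod_jacobson_if_uniquely_weakly_J_clean Idem_set_if_zero_pm_one_mod_jacobson
      uniquely_weakly_J_clean_if_zero_pm_one_mod_jacobson[OF assms(2)] by blast
  have "local_ring R \<and> uniquely_weakly_J_clean R
      \<longleftrightarrow> uniquely_weakly_J_clean R \<and> Idem_set R = {\<zero>\<^bsub>R\<^esub>, \<one>\<^bsub>R\<^esub>}"
    using local_ring_Idem_set local_ring_if_zero_pm_one_mod_jacobson[OF assms(2)] clean_iff by blast
  moreover have "zero_pm_one_mod_jacobson R
      \<longleftrightarrow> R Quot jacobson R \<simeq> ZFact 2 \<or> R Quot jacobson R \<simeq> ZFact 3"
    using quotient_jacobson_iso_ZFact_2_or_3[OF assms(2)] zero_pm_one_mod_jacobson_if_quotient_iso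
    by blast
  ultimately show ?thesis using clean_iff by blast
qed

end
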